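(* Let $G=G_2$ and $K=SU(3)\subseteq G_2$. For $X,Y\in\mathfrak p\subseteq\mathfrak g_2$, $[X,Y]=0$ if and only if $[X,Y]_{\mathfrak k}=0$.
   Context: $G_2=\operatorname{Aut}(\mathbb{O})\subseteq SO(7)$ is the automorphism group of the octonions acting on $\operatorname{Im}\mathbb{O}$, and $K=\{g\in G_2: g(i)=i\}\cong SU(3)$ for a fixed unit imaginary octonion $i$. Let $\mathfrak g=\mathfrak g_2$ and $\mathfrak k$ be their Lie algebras, $\langle X,Y\rangle_0=-\operatorname{tr}(XY)$, $\mathfrak p$ the $\langle\cdot,\cdot\rangle_0$-orthogonal complement of $\mathfrak k$ in $\mathfrak g$, and $X=X_{\mathfrak k}+X_{\mathfrak p}$ the corresponding decomposition. *)

theory Defs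
  imports "HOL-Analysis.Analysis"
begin

text \<open>Structure constants of the 7-dimensional cross product (imaginary octonion
  product) with respect to the orthonormal basis e_0,...,e_6 of Im O, indices mod 7:
  the quaternionic triples are (a, a+1, a+3), i.e. e_a e_(a+1) = e_(a+3) for all a.\<close>
definition eps7 :: "7 \<Rightarrow> 7 \<Rightarrow> 7 \<Rightarrow> real" where
  "eps7 i j k =
     (if (j - i, k - i) \<in> {(1,3), (2,6), (4,5)} then 1
      else if (j - i, k - i) \<in> {(3,1), (6,2), (5,4)} then -1 else 0)"

definition cross7 :: "real^7 \<Rightarrow> real^7 \<Rightarrow> real^7" where
  "cross7 u v = (\<chi> k. \<Sum>i\<in>UNIV. \<Sum>j\<in>UNIV. eps7 i j k * u$i * v$j)"

type_synonym octonion = "real \<times> (real^7)"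

definition omult :: "octonion \<Rightarrow> octonion \<Rightarrow> octonion" where
  "omult p q = (fst p * fst q - inner (snd p) (snd q),
                fst p *\<^sub>R snd q + fst q *\<^sub>R snd p + cross7 (snd p) (snd q))"

definition G2 :: "(real^7^7) set" where
  "G2 = {g. \<exists>\<phi> :: octonion \<Rightarrow> octonion. linear \<phi> \<and> bij \<phi> \<and>
            (\<forall>p q. \<phi> (omult p q) = omult (\<phi> p) (\<phi> q)) \<and>
            (\<forall>u. \<phi> (0, u) = (0, g *v u))}"

definition K_stab :: "real^7 \<Rightarrow> (real^7^7) set" where
  "K_stab i = {g \<in> G2. g *v i = i}"

fun mpow :: "real^'n^'n \<Rightarrow> nat \<Rightarrow> real^'n^'n" where
  "mpow X 0 = mat 1"
| "mpow X (Suc n) = X ** mpow X n"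

definition mexp :: "real^'n^'n \<Rightarrow> real^'n^'n" where
  "mexp X = (\<Sum>n. (1 / fact n) *\<^sub>R mpow X n)"

definition lie_algebra :: "(real^'n^'n) set \<Rightarrow> (real^'n^'n) set" where
  "lie_algebra S = {X. \<forall>t::real. mexp (t *\<^sub>R X) \<in> S}"

definition lie_bracket :: "real^'n^'n \<Rightarrow> real^'n^'n \<Rightarrow> real^'n^'n" where
  "lie_bracket X Y = X ** Y - Y ** X"

definition g2 :: "(real^7^7) set" where
  "g2 = lie_algebra G2"

definition k_alg :: "real^7 \<Rightarrow> (real^7^7) set" where
  "k_alg i = lie_algebra (K_stab i)"

definition form0 :: "real^'n^'n \<Rightarrow> real^'n^'n \<Rightarrow> real" where
  "form0 X Y = - trace (X ** Y)"

definition p_space :: "real^7 \<Rightarrow> (real^7^7) set" where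
  "p_space i = {X \<in> g2. \<forall>Z \<in> k_alg i. form0 X Z = 0}"

definition k_part :: "real^7 \<Rightarrow> real^7^7 \<Rightarrow> real^7^7" where
  "k_part i X = (THE Z. Z \<in> k_alg i \<and> X - Z \<in> p_space i)"

end

theory Submission
  imports Defs
begin

text \<open>\<open>G\<^sub>2\<close> is the group of orthogonal maps of \<open>Im \<bbbO>\<close> preserving the cross product, so
  \<open>\<gg>\<^sub>2\<close> consists of the skew-symmetric derivations of the cross product and \<open>\<kk>\<close> of those
  killing \<open>i\<close>. An element \<open>X \<in> \<pp>\<close> is determined by \<open>u = X i \<bottom> i\<close> through an explicit
  formula \<open>X = P(u)\<close>, hence the \<open>\<kk>\<close>-part of \<open>W \<in> \<gg>\<^sub>2\<close> is \<open>W - P(W i)\<close> and vanishes iff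
  \<open>W \<in> \<pp>\<close>. For \<open>X = P(u), Y = P(v)\<close> one finds \<open>[X, Y] i = i \<times> (u \<times> v)\<close>; if \<open>[X, Y] \<in> \<pp>\<close>,
  evaluating \<open>\<langle>[X, Y] u, v\<rangle>\<close> in two ways forces equality in Cauchy-Schwarz, so \<open>u\<close> and \<open>v\<close>
  are parallel and \<open>[X, Y] = 0\<close>.\<close>

section \<open>The cross product on \<open>\<real>\<^sup>7\<close> in coordinates\<close>

lemma num7_cases:
  fixes x :: 7
  shows "x = 0 \<or> x = 1 \<or> x = 2 \<or> x = 3 \<or> x = 4 \<or> x = 5 \<or> x = 6"
proof (induct x)
  case (of_int z)
  then have "z = 0 \<or> z = 1 \<or> z = 2 \<or> z = 3 \<or> z = 4 \<or> z = 5 \<or> z = 6" by fastforce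
  then show ?case by auto
qed

lemma UNIV_num7: "(UNIV::7 set) = {0,1,2,3,4,5,6}"
  using num7_cases by auto

lemma sum_UNIV_num7: "sum f (UNIV::7 set) = f 0 + f 1 + f 2 + f 3 + f 4 + f 5 + f 6"
  unfolding UNIV_num7 by (simp add: add.assoc)

lemma all_num7: "(\<forall>k::7. P k) \<longleftrightarrow> P 0 \<and> P 1 \<and> P 2 \<and> P 3 \<and> P 4 \<and> P 5 \<and> P 6"
  by (metis num7_cases)

lemma cross7_components:
  "cross7 u v $ 0 = u$1 * v$3 + u$2 * v$6 - u$3 * v$1 + u$4 * v$5 - u$5 * v$4 - u$6 * v$2"
  "cross7 u v $ 1 = - u$0 * v$3 + u$2 * v$4 + u$3 * v$0 - u$4 * v$2 + u$5 * v$6 - u$6 * v$5"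
  "cross7 u v $ 2 = - u$0 * v$6 - u$1 * v$4 + u$3 * v$5 + u$4 * v$1 - u$5 * v$3 + u$6 * v$0"
  "cross7 u v $ 3 = u$0 * v$1 - u$1 * v$0 - u$2 * v$5 + u$4 * v$6 + u$5 * v$2 - u$6 * v$4"
  "cross7 u v $ 4 = - u$0 * v$5 + u$1 * v$2 - u$2 * v$1 - u$3 * v$6 + u$5 * v$0 + u$6 * v$3"
  "cross7 u v $ 5 = u$0 * v$4 - u$1 * v$6 + u$2 * v$3 - u$3 * v$2 - u$4 * v$0 + u$6 * v$1"
  "cross7 u v $ 6 = u$0 * v$2 + u$1 * v$5 - u$2 * v$0 + u$3 * v$4 - u$4 * v$3 - u$5 * v$1"
  by (simp_all add: cross7_def sum_UNIV_num7 eps7_def)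

lemma inner_real7:
  "(u::real^7) \<bullet> v = u$0 * v$0 + u$1 * v$1 + u$2 * v$2 + u$3 * v$3 + u$4 * v$4 + u$5 * v$5 + u$6 * v$6"
  by (simp add: inner_vec_def sum_UNIV_num7)

lemmas real7_coordinates = vec_eq_iff all_num7 cross7_components inner_real7
  vector_add_component vector_minus_component vector_scaleR_component vector_uminus_component
  zero_index real_scaleR_def

lemma cross7_add_right: "cross7 c (a + b) = cross7 c a + cross7 c b"
  unfolding real7_coordinates by (intro conjI; algebra)

lemma cross7_mult_right: "cross7 c (r *\<^sub>R a) = r *\<^sub>R cross7 c a"
  unfolding real7_coordinates by (intro conjI; algebra)

lemma cross7_left_diff_distrib: "cross7 (a - b) c = cross7 a c - cross7 b c"
  unfolding real7_coordinates by (intro conjI; algebra)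

lemma cross7_right_diff_distrib: "cross7 c (a - b) = cross7 c a - cross7 c b"
  unfolding real7_coordinates by (intro conjI; algebra)

lemma cross7_minus_right: "cross7 c (- a) = - cross7 c a"
  unfolding real7_coordinates by (intro conjI; algebra)

lemma cross7_skew: "cross7 a b = - cross7 b a"
  unfolding real7_coordinates by (intro conjI; algebra)

lemma cross7_zero_left [simp]: "cross7 0 a = 0"
  unfolding real7_coordinates by (intro conjI; algebra)

lemma cross7_zero_right [simp]: "cross7 a 0 = 0"
  unfolding real7_coordinates by (intro conjI; algebra)

lemma cross7_refl [simp]: "cross7 a a = 0"
  unfolding real7_coordinates by (intro conjI; algebra)

lemma dot_cross7_self: "a \<bullet> cross7 a b = 0"
  unfolding real7_coordinates by algebra

lemma norm_cross7: "cross7 a b \<bullet> cross7 a b = (a \<bullet> a) * (b \<bullet> b) - (a \<bullet> b)\<^sup>2"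
  unfolding real7_coordinates by algebra

lemma cross7_cross7_polar:
  "cross7 a (cross7 c b) + cross7 c (cross7 a b) = (a \<bullet> b) *\<^sub>R c + (c \<bullet> b) *\<^sub>R a - (2 * (a \<bullet> c)) *\<^sub>R b"
  unfolding real7_coordinates by (intro conjI; algebra)

lemma dot_cross7_cross7: "cross7 a (cross7 b c) \<bullet> d = - (b \<bullet> cross7 c (cross7 a d))"
  unfolding real7_coordinates by algebra

lemma linear_cross7: "linear (cross7 c)"
  by (rule linearI) (simp_all add: cross7_add_right cross7_mult_right)

section \<open>The matrix exponential\<close>

lemma mpow_scaleR: "mpow (t *\<^sub>R X) n = (t ^ n) *\<^sub>R mpow X n"
  by (induct n) (auto simp: vec_eq_iff matrix_matrix_mult_def sum_distrib_left mult_ac)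

lemma scaleR_matrix_vector_mult: "(c *\<^sub>R M) *v u = c *\<^sub>R (M *v (u::real^'n))"
  by (simp add: matrix_vector_mult_def vec_eq_iff sum_distrib_left mult.assoc)

definition abs_entry_sum :: "real^'n^'m \<Rightarrow> real" where
  "abs_entry_sum X = (\<Sum>a\<in>UNIV. \<Sum>b\<in>UNIV. \<bar>X$a$b\<bar>)"

lemma abs_entry_sum_nonneg: "0 \<le> abs_entry_sum X"
  by (simp add: abs_entry_sum_def sum_nonneg)

lemma row_abs_sum_le_abs_entry_sum: "(\<Sum>k\<in>UNIV. \<bar>X$a$k\<bar>) \<le> abs_entry_sum X"
  unfolding abs_entry_sum_def by (rule member_le_sum) (auto intro: sum_nonneg)

lemma norm_le_abs_entry_sum: "norm X \<le> abs_entry_sum X"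
proof -
  have "norm X \<le> (\<Sum>a\<in>UNIV. norm (X$a))"
    unfolding norm_vec_def by (rule L2_set_le_sum) simp
  also have "\<dots> \<le> abs_entry_sum X"
    unfolding abs_entry_sum_def by (rule sum_mono) (rule norm_le_l1_cart)
  finally show ?thesis .
qed

lemma abs_mpow_entry_le: "\<bar>mpow X n $ a $ b\<bar> \<le> abs_entry_sum X ^ n"
proof (induct n arbitrary: a b)
  case 0
  then show ?case by (simp add: mat_def)
next
  case (Suc n)
  have "\<bar>mpow X (Suc n) $ a $ b\<bar> \<le> (\<Sum>k\<in>UNIV. \<bar>X$a$k\<bar> * \<bar>mpow X n $ k $ b\<bar>)"
    by (simp add: matrix_matrix_mult_def order_trans[OF sum_abs] abs_mult)
  also have "\<dots> \<le> (\<Sum>k\<in>UNIV. \<bar>X$a$k\<bar>) * abs_entry_sum X ^ n"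
    by (simp add: sum_distrib_right sum_mono mult_left_mono Suc)
  also have "\<dots> \<le> abs_entry_sum X ^ Suc n"
    by (simp add: mult_right_mono[OF row_abs_sum_le_abs_entry_sum] abs_entry_sum_nonneg)
  finally show ?case .
qed

lemma abs_mpow_mult_vec_le:
  "\<bar>(mpow X n *v u) $ k\<bar> \<le> abs_entry_sum X ^ n * (\<Sum>j\<in>UNIV. \<bar>u$j\<bar>)"
proof -
  have "\<bar>(mpow X n *v u) $ k\<bar> \<le> (\<Sum>j\<in>UNIV. \<bar>mpow X n $ k $ j\<bar> * \<bar>u $ j\<bar>)"
    by (simp add: matrix_vector_mult_def order_trans[OF sum_abs] abs_mult)
  also have "\<dots> \<le> (\<Sum>j\<in>UNIV. abs_entry_sum X ^ n * \<bar>u $ j\<bar>)"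
    by (rule sum_mono) (simp add: mult_right_mono abs_mpow_entry_le)
  finally show ?thesis by (simp add: sum_distrib_left)
qed

lemma summable_mexp: "summable (\<lambda>n. (1 / fact n) *\<^sub>R mpow (X::real^'n^'n) n)"
proof (rule summable_comparison_test')
  show "summable (\<lambda>n. real CARD('n) ^ 2 * (inverse (fact n) * abs_entry_sum X ^ n))"
    by (intro summable_mult summable_exp)
next
  fix n
  have "norm ((1 / fact n) *\<^sub>R mpow X n) = (1 / fact n) * norm (mpow X n)"
    by simp
  also have "\<dots> \<le> (1 / fact n) * (\<Sum>a\<in>(UNIV::'n set). \<Sum>b\<in>(UNIV::'n set). abs_entry_sum X ^ n)"
    by (intro mult_left_mono order_trans[OF norm_le_abs_entry_sum[unfolded abs_entry_sum_def]]
        sum_mono abs_mpow_entry_le) simp_all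
  finally show "norm ((1 / fact n) *\<^sub>R mpow X n) \<le> real CARD('n) ^ 2 * (inverse (fact n) * abs_entry_sum X ^ n)"
    by (simp add: field_simps power2_eq_square)
qed

definition mexp_coeff :: "real^'n^'n \<Rightarrow> real^'n \<Rightarrow> 'n \<Rightarrow> nat \<Rightarrow> real" where
  "mexp_coeff X u k n = (mpow X n *v u) $ k / fact n"

lemma mexp_scaleR_mult_vec_nth:
  fixes X :: "real^'n^'n"
  shows "(mexp (t *\<^sub>R X) *v u) $ k = (\<Sum>n. mexp_coeff X u k n * t ^ n)"
proof -
  have "bounded_linear (\<lambda>M::real^'n^'n. (M *v u) $ k)"
    by (auto intro!: linear_conv_bounded_linear[THEN iffD1] linearI
        simp: matrix_vector_mult_def sum.distrib sum_distrib_left algebra_simps)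
  from bounded_linear.suminf[OF this summable_mexp[of "t *\<^sub>R X"]]
  show ?thesis
    unfolding mexp_def by (simp add: mpow_scaleR scaleR_matrix_vector_mult mexp_coeff_def mult.commute)
qed

lemma summable_mexp_coeff: "summable (\<lambda>n. mexp_coeff X u k n * t ^ n)"
proof (rule summable_comparison_test')
  show "summable (\<lambda>n. (\<Sum>j\<in>UNIV. \<bar>u$j\<bar>) * (inverse (fact n) * (abs_entry_sum X * \<bar>t\<bar>) ^ n))"
    by (intro summable_mult summable_exp)
next
  fix n
  have "norm (mexp_coeff X u k n * t ^ n) = \<bar>(mpow X n *v u) $ k\<bar> * \<bar>t\<bar> ^ n / fact n"
    by (simp add: mexp_coeff_def abs_mult power_abs)
  also have "\<dots> \<le> (abs_entry_sum X ^ n * (\<Sum>j\<in>UNIV. \<bar>u$j\<bar>)) * \<bar>t\<bar> ^ n / fact n"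
    by (intro divide_right_mono mult_right_mono abs_mpow_mult_vec_le) simp_all
  finally show "norm (mexp_coeff X u k n * t ^ n)
      \<le> (\<Sum>j\<in>UNIV. \<bar>u$j\<bar>) * (inverse (fact n) * (abs_entry_sum X * \<bar>t\<bar>) ^ n)"
    by (simp add: field_simps power_mult_distrib)
qed

lemma diffs_mexp_coeff: "diffs (mexp_coeff X u k) n = (\<Sum>j\<in>UNIV. X$k$j * mexp_coeff X u j n)"
proof -
  have "fact (Suc n) = real (Suc n) * (fact n :: real)"
    by (simp only: fact_Suc)
  then have "diffs (mexp_coeff X u k) n = (X *v (mpow X n *v u)) $ k / fact n"
    by (simp add: diffs_def mexp_coeff_def matrix_vector_mul_assoc del: of_nat_Suc)
  then show ?thesis
    by (simp add: matrix_vector_mult_def mexp_coeff_def sum_divide_distrib[symmetric])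
qed

lemma has_real_derivative_mexp_scaleR_mult_vec:
  "((\<lambda>s. (mexp (s *\<^sub>R X) *v u) $ k) has_real_derivative (X *v (mexp (t *\<^sub>R X) *v u)) $ k) (at t)"
proof -
  have "((\<lambda>s. \<Sum>n. mexp_coeff X u k n * s ^ n)
      has_real_derivative (\<Sum>n. diffs (mexp_coeff X u k) n * t ^ n)) (at t)"
    by (rule termdiffs_strong_converges_everywhere) (rule summable_mexp_coeff)
  moreover have "(\<Sum>n. diffs (mexp_coeff X u k) n * t ^ n) = (X *v (mexp (t *\<^sub>R X) *v u)) $ k"
  proof -
    have "(\<Sum>n. diffs (mexp_coeff X u k) n * t ^ n)
        = (\<Sum>n. \<Sum>j\<in>UNIV. X$k$j * (mexp_coeff X u j n * t ^ n))"
      by (simp add: diffs_mexp_coeff sum_distrib_right mult.assoc)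
    also have "\<dots> = (\<Sum>j\<in>UNIV. X$k$j * (\<Sum>n. mexp_coeff X u j n * t ^ n))"
      by (simp add: suminf_sum summable_mult summable_mexp_coeff suminf_mult)
    also have "\<dots> = (\<Sum>j\<in>UNIV. X$k$j * (mexp (t *\<^sub>R X) *v u) $ j)"
      by (simp only: mexp_scaleR_mult_vec_nth)
    finally show ?thesis
      by (simp add: matrix_vector_mult_def)
  qed
  ultimately show ?thesis
    by (simp add: mexp_scaleR_mult_vec_nth)
qed

lemma mexp_zero_mult_vec [simp]: "mexp 0 *v u = (u::real^'n)"
proof -
  have "(mexp (0 *\<^sub>R (0::real^'n^'n)) *v u) $ k = u $ k" for k
    unfolding mexp_scaleR_mult_vec_nth powser_zero by (simp add: mexp_coeff_def)
  then show ?thesis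
    by (simp add: vec_eq_iff)
qed

lemma mexp_mult_vec_fixed:
  assumes "X *v u = 0"
  shows "mexp (t *\<^sub>R X) *v u = u"
proof -
  have "mpow X n *v u = (if n = 0 then u else 0)" for n
    by (induct n) (auto simp: matrix_vector_mul_assoc[symmetric] assms)
  then have "(\<lambda>n. mexp_coeff X u k n * t ^ n) = (\<lambda>n. if n = 0 then u $ k else 0)" for k
    by (auto simp: mexp_coeff_def fun_eq_iff gr0_conv_Suc)
  then show ?thesis
    by (simp add: vec_eq_iff mexp_scaleR_mult_vec_nth sums_single[THEN sums_unique, symmetric])
qed

definition has_cart_derivative :: "(real \<Rightarrow> real^'n) \<Rightarrow> real^'n \<Rightarrow> real \<Rightarrow> bool" where
  "has_cart_derivative f f' t \<longleftrightarrow> (\<forall>k. ((\<lambda>s. f s $ k) has_real_derivative f' $ k) (at t))"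

lemma has_cart_derivative_mexp:
  "has_cart_derivative (\<lambda>s. mexp (s *\<^sub>R X) *v u) (X *v (mexp (t *\<^sub>R X) *v u)) t"
  unfolding has_cart_derivative_def using has_real_derivative_mexp_scaleR_mult_vec by blast

lemma has_cart_derivative_diff:
  "has_cart_derivative f f' t \<Longrightarrow> has_cart_derivative g g' t
    \<Longrightarrow> has_cart_derivative (\<lambda>s. f s - g s) (f' - g') t"
  unfolding has_cart_derivative_def by (auto intro!: DERIV_diff)

lemma has_cart_derivative_unique:
  "has_cart_derivative f f' t \<Longrightarrow> has_cart_derivative f f'' t \<Longrightarrow> f' = f''"
  unfolding has_cart_derivative_def vec_eq_iff using DERIV_unique by blast

lemma DERIV_cmult_mult:
  assumes "(f has_real_derivative f') (at t)" "(g has_real_derivative g') (at t)"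
  shows "((\<lambda>s. c * f s * g s) has_real_derivative (c * f' * g t + c * f t * g')) (at t)"
  using DERIV_mult[OF DERIV_cmult[OF assms(1)] assms(2)] by (simp add: algebra_simps)

lemma has_cart_derivative_cross7:
  assumes "has_cart_derivative f f' t" "has_cart_derivative g g' t"
  shows "has_cart_derivative (\<lambda>s. cross7 (f s) (g s)) (cross7 f' (g t) + cross7 (f t) g') t"
  unfolding has_cart_derivative_def
proof
  fix k
  have "((\<lambda>s. \<Sum>i\<in>UNIV. \<Sum>j\<in>UNIV. eps7 i j k * f s $ i * g s $ j) has_real_derivative
      (\<Sum>i\<in>UNIV. \<Sum>j\<in>UNIV. eps7 i j k * f' $ i * g t $ j + eps7 i j k * f t $ i * g' $ j)) (at t)"
    using assms unfolding has_cart_derivative_def by (intro DERIV_sum DERIV_cmult_mult) auto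
  then show "((\<lambda>s. cross7 (f s) (g s) $ k) has_real_derivative
      (cross7 f' (g t) + cross7 (f t) g') $ k) (at t)"
    by (simp add: cross7_def sum.distrib)
qed

lemma has_real_derivative_inner:
  assumes "has_cart_derivative f f' t" "has_cart_derivative g g' t"
  shows "((\<lambda>s. f s \<bullet> g s) has_real_derivative (f' \<bullet> g t + f t \<bullet> g')) (at t)"
proof -
  have "((\<lambda>s. \<Sum>i\<in>UNIV. 1 * f s $ i * g s $ i) has_real_derivative
      (\<Sum>i\<in>UNIV. 1 * f' $ i * g t $ i + 1 * f t $ i * g' $ i)) (at t)"
    using assms unfolding has_cart_derivative_def by (intro DERIV_sum DERIV_cmult_mult) auto
  then show ?thesis
    by (simp add: inner_vec_def sum.distrib)
qed

section \<open>The Lie algebras of \<open>G\<^sub>2\<close> and \<open>K\<close>\<close>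

definition skew_symmetric :: "real^'n^'n \<Rightarrow> bool" where
  "skew_symmetric X \<longleftrightarrow> (\<forall>u v. (X *v u) \<bullet> v = - (u \<bullet> (X *v v)))"

definition cross7_derivation :: "real^7^7 \<Rightarrow> bool" where
  "cross7_derivation X \<longleftrightarrow> (\<forall>u v. X *v cross7 u v = cross7 (X *v u) v + cross7 u (X *v v))"

definition cross7_automorphism :: "real^7^7 \<Rightarrow> bool" where
  "cross7_automorphism g \<longleftrightarrow>
     (\<forall>u v. g *v cross7 u v = cross7 (g *v u) (g *v v)) \<and> (\<forall>u v. (g *v u) \<bullet> (g *v v) = u \<bullet> v)"

lemma skew_symmetric_inner_self: "skew_symmetric X \<Longrightarrow> u \<bullet> (X *v u) = 0"
  unfolding skew_symmetric_def by (metis inner_commute neg_equal_zero)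

text \<open>Uniqueness for \<open>G' = X G\<close> with \<open>X\<close> skew: the derivative of \<open>\<parallel>G\<parallel>\<^sup>2\<close> is \<open>2 G \<bullet> X G = 0\<close>.\<close>
lemma skew_symmetric_linear_ode_zero:
  assumes "skew_symmetric X" and "\<And>s. has_cart_derivative G (X *v G s) s" and "G 0 = 0"
  shows "G t = 0"
proof -
  have "\<forall>s. ((\<lambda>s. G s \<bullet> G s) has_real_derivative 0) (at s)"
  proof
    fix s
    show "((\<lambda>s. G s \<bullet> G s) has_real_derivative 0) (at s)"
      using has_real_derivative_inner[OF assms(2) assms(2), of s]
        skew_symmetric_inner_self[OF assms(1), of "G s"]
      by (simp add: inner_commute)
  qed
  then have "G t \<bullet> G t = G 0 \<bullet> G 0"
    by (rule DERIV_isconst_all)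
  with assms(3) show ?thesis
    by simp
qed

lemma G2_iff_cross7_automorphism: "g \<in> G2 \<longleftrightarrow> cross7_automorphism g"
proof
  assume "g \<in> G2"
  then obtain \<phi> :: "octonion \<Rightarrow> octonion" where lin: "linear \<phi>" and "surj \<phi>"
    and hom: "\<And>p q. \<phi> (omult p q) = omult (\<phi> p) (\<phi> q)" and im: "\<And>u. \<phi> (0, u) = (0, g *v u)"
    unfolding G2_def bij_def by blast
  have one_left: "omult (1, 0) p = p" and one_right: "omult p (1, 0) = p" for p
    by (cases p; simp add: omult_def)+
  obtain p0 where "(1, 0) = \<phi> p0"
    using surjD[OF \<open>surj \<phi>\<close>] by blast
  then have "\<phi> (1, 0) = (1, 0)" \<comment> \<open>a left unit of the image of \<open>\<phi>\<close>, which is everything\<close>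
    using hom[of "(1, 0)" p0] one_left one_right by simp
  then have "\<phi> (a, 0) = (a, 0)" for a
    using linear_scale[OF lin, of a "(1, 0)"] by simp
  then have \<phi>: "\<phi> (a, w) = (a, g *v w)" for a w
    using linear_add[OF lin, of "(a, 0)" "(0, w)"] im by simp
  show "cross7_automorphism g"
    using hom[of "(0, u)" "(0, v)" for u v] by (simp add: \<phi> omult_def cross7_automorphism_def)
next
  assume "cross7_automorphism g"
  then have cross: "g *v cross7 u v = cross7 (g *v u) (g *v v)"
    and inner: "(g *v u) \<bullet> (g *v v) = u \<bullet> v" for u v
    unfolding cross7_automorphism_def by auto
  have "orthogonal_transformation (\<lambda>x. g *v x)"
    unfolding orthogonal_transformation_def using inner by simp
  then have "bij (\<lambda>x. g *v x)"
    by (simp add: bij_def orthogonal_transformation_inj orthogonal_transformation_surj)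
  then have "bij (map_prod id (\<lambda>x. g *v x))"
    using bij_betw_map_prod[OF bij_id] by fastforce
  moreover have "linear (map_prod id (\<lambda>x. g *v x))"
    by (rule linearI) (auto simp: matrix_vector_right_distrib matrix_vector_mult_scaleR)
  moreover have "map_prod id (\<lambda>x. g *v x) (omult p q)
      = omult (map_prod id (\<lambda>x. g *v x) p) (map_prod id (\<lambda>x. g *v x) q)" for p q
    by (cases p; cases q) (simp add: omult_def inner cross matrix_vector_right_distrib matrix_vector_mult_scaleR)
  ultimately show "g \<in> G2"
    unfolding G2_def by (intro CollectI exI[of _ "map_prod id (\<lambda>x. g *v x)"]) auto
qed

lemma derivation_skew_of_mexp_automorphism:
  assumes "\<And>t. cross7_automorphism (mexp (t *\<^sub>R X))"
  shows "cross7_derivation X \<and> skew_symmetric X"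
proof -
  note E = has_cart_derivative_mexp[of X _ 0, simplified]
  have "X *v cross7 u v = cross7 (X *v u) v + cross7 u (X *v v)" for u v
  proof (rule has_cart_derivative_unique)
    show "has_cart_derivative (\<lambda>s. mexp (s *\<^sub>R X) *v cross7 u v) (X *v cross7 u v) 0"
      by (rule E)
    show "has_cart_derivative (\<lambda>s. mexp (s *\<^sub>R X) *v cross7 u v) (cross7 (X *v u) v + cross7 u (X *v v)) 0"
      using has_cart_derivative_cross7[OF E E] assms by (simp add: cross7_automorphism_def)
  qed
  moreover have "(X *v u) \<bullet> v + u \<bullet> (X *v v) = 0" for u v
  proof (rule DERIV_unique)
    show "((\<lambda>s. (mexp (s *\<^sub>R X) *v u) \<bullet> (mexp (s *\<^sub>R X) *v v)) has_real_derivative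
        ((X *v u) \<bullet> v + u \<bullet> (X *v v))) (at 0)"
      using has_real_derivative_inner[OF E E] by simp
    show "((\<lambda>s. (mexp (s *\<^sub>R X) *v u) \<bullet> (mexp (s *\<^sub>R X) *v v)) has_real_derivative 0) (at 0)"
      using assms by (simp add: cross7_automorphism_def)
  qed
  ultimately show ?thesis
    unfolding cross7_derivation_def skew_symmetric_def by (simp add: eq_neg_iff_add_eq_0)
qed

lemma mexp_automorphism_of_derivation_skew:
  assumes der: "cross7_derivation X" and skew: "skew_symmetric X"
  shows "cross7_automorphism (mexp (t *\<^sub>R X))"
proof -
  note E = has_cart_derivative_mexp[of X]
  have "(mexp (t *\<^sub>R X) *v u) \<bullet> (mexp (t *\<^sub>R X) *v v) = u \<bullet> v" for u v
  proof -
    have "\<forall>s. ((\<lambda>s. (mexp (s *\<^sub>R X) *v u) \<bullet> (mexp (s *\<^sub>R X) *v v)) has_real_derivative 0) (at s)"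
    proof
      fix s
      show "((\<lambda>s. (mexp (s *\<^sub>R X) *v u) \<bullet> (mexp (s *\<^sub>R X) *v v)) has_real_derivative 0) (at s)"
        using has_real_derivative_inner[OF E E] skew unfolding skew_symmetric_def by simp
    qed
    from DERIV_isconst_all[OF this, of t 0] show ?thesis
      by simp
  qed
  moreover have "mexp (t *\<^sub>R X) *v cross7 u v = cross7 (mexp (t *\<^sub>R X) *v u) (mexp (t *\<^sub>R X) *v v)" for u v
  proof -
    define G where "G s = mexp (s *\<^sub>R X) *v cross7 u v - cross7 (mexp (s *\<^sub>R X) *v u) (mexp (s *\<^sub>R X) *v v)"
      for s
    have "has_cart_derivative G (X *v G s) s" for s
      using has_cart_derivative_diff[OF E has_cart_derivative_cross7[OF E E]] der
      unfolding G_def cross7_derivation_def by (simp add: matrix_vector_mult_diff_distrib)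
    moreover have "G 0 = 0"
      by (simp add: G_def)
    ultimately have "G t = 0"
      by (rule skew_symmetric_linear_ode_zero[OF skew])
    then show ?thesis
      by (simp add: G_def)
  qed
  ultimately show ?thesis
    unfolding cross7_automorphism_def by blast
qed

lemma g2_iff: "X \<in> g2 \<longleftrightarrow> cross7_derivation X \<and> skew_symmetric X"
  unfolding g2_def lie_algebra_def G2_iff_cross7_automorphism
  using derivation_skew_of_mexp_automorphism mexp_automorphism_of_derivation_skew by blast

lemma mexp_fixes_iff: "(\<forall>t. mexp (t *\<^sub>R X) *v u = u) \<longleftrightarrow> X *v u = 0"
proof
  assume "\<forall>t. mexp (t *\<^sub>R X) *v u = u"
  then show "X *v u = 0"
    using has_cart_derivative_unique[OF has_cart_derivative_mexp[of X u 0]]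
    by (simp add: has_cart_derivative_def)
qed (simp add: mexp_mult_vec_fixed)

lemma k_alg_iff: "X \<in> k_alg i \<longleftrightarrow> X \<in> g2 \<and> X *v i = 0"
  unfolding k_alg_def g2_def lie_algebra_def K_stab_def
  using mexp_fixes_iff[of X i] by auto

section \<open>The complement \<open>\<pp>\<close> of \<open>\<kk>\<close> in \<open>\<gg>\<^sub>2\<close>\<close>

definition outer :: "real^'n \<Rightarrow> real^'m \<Rightarrow> real^'m^'n" where
  "outer a b = (\<chi> r s. a$r * b$s)"

definition cross7_matrix :: "real^7 \<Rightarrow> real^7^7" where
  "cross7_matrix c = matrix (cross7 c)"

text \<open>\<open>p_matrix i u\<close> is the element of \<open>\<pp>\<close> sending the unit vector \<open>i\<close> to \<open>u \<bottom> i\<close>. Both summands are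
  orthogonal to \<open>\<kk>\<close>: the rank two part because \<open>\<kk>\<close> kills \<open>i\<close>, and the commutator of left
  multiplications because \<open>cross7_matrix i\<close> commutes with \<open>\<kk>\<close>; the weights \<open>3/4, 1/4\<close>
  make the sum a derivation.\<close>
definition p_matrix :: "real^7 \<Rightarrow> real^7 \<Rightarrow> real^7^7" where
  "p_matrix i u = (3/4) *\<^sub>R (outer u i - outer i u)
     + (1/4) *\<^sub>R (cross7_matrix i ** cross7_matrix u - cross7_matrix u ** cross7_matrix i)"

lemma outer_mult_vec: "outer a b *v x = (b \<bullet> x) *\<^sub>R a"
  by (simp add: outer_def matrix_vector_mult_def vec_eq_iff inner_vec_def sum_distrib_left mult_ac)

lemma cross7_matrix_mult_vec: "cross7_matrix c *v x = cross7 c x"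
  by (simp add: cross7_matrix_def matrix_works linear_cross7)

lemma p_matrix_mult_vec:
  "p_matrix i u *v x = (3/4) *\<^sub>R ((i \<bullet> x) *\<^sub>R u - (u \<bullet> x) *\<^sub>R i)
     + (1/4) *\<^sub>R (cross7 i (cross7 u x) - cross7 u (cross7 i x))"
  unfolding p_matrix_def
  by (simp add: matrix_vector_mult_add_rdistrib matrix_vector_mult_diff_rdistrib
      scaleR_matrix_vector_mult outer_mult_vec matrix_vector_mul_assoc[symmetric] cross7_matrix_mult_vec)

lemma p_matrix_mult_vec_expand:
  "p_matrix i w *v x = (1/2 * (i \<bullet> x)) *\<^sub>R w - (w \<bullet> x) *\<^sub>R i + (1/2) *\<^sub>R cross7 i (cross7 w x)
     + (1/2 * (i \<bullet> w)) *\<^sub>R x"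
  unfolding p_matrix_mult_vec real7_coordinates by (intro conjI; algebra)

lemma p_matrix_mult_vec_self:
  "i \<bullet> i = 1 \<Longrightarrow> i \<bullet> u = 0 \<Longrightarrow> p_matrix i u *v i = u"
  unfolding p_matrix_mult_vec real7_coordinates by (intro conjI; algebra)

lemma p_matrix_scaleR: "p_matrix i (c *\<^sub>R u) = c *\<^sub>R p_matrix i u"
  unfolding matrix_eq scaleR_matrix_vector_mult p_matrix_mult_vec real7_coordinates
  by (intro allI conjI; algebra)

lemma p_matrix_zero [simp]: "p_matrix i 0 = 0"
  using p_matrix_scaleR[of i 0 0] by simp

lemma p_matrix_in_g2: "p_matrix i u \<in> g2"
proof -
  have "cross7_derivation (p_matrix i u)"
    unfolding cross7_derivation_def p_matrix_mult_vec real7_coordinates by (intro allI conjI; algebra)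
  moreover have "skew_symmetric (p_matrix i u)"
    unfolding skew_symmetric_def p_matrix_mult_vec real7_coordinates by (intro allI; algebra)
  ultimately show ?thesis
    by (simp add: g2_iff)
qed

lemma cross7_derivation_diff:
  "cross7_derivation A \<Longrightarrow> cross7_derivation B \<Longrightarrow> cross7_derivation (A - B)"
  unfolding cross7_derivation_def
  by (simp add: matrix_vector_mult_diff_rdistrib cross7_left_diff_distrib cross7_right_diff_distrib algebra_simps)

lemma skew_symmetric_diff: "skew_symmetric A \<Longrightarrow> skew_symmetric B \<Longrightarrow> skew_symmetric (A - B)"
  unfolding skew_symmetric_def by (simp add: matrix_vector_mult_diff_rdistrib inner_diff_left inner_diff_right)

lemma g2_diff: "A \<in> g2 \<Longrightarrow> B \<in> g2 \<Longrightarrow> A - B \<in> g2"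
  by (simp add: g2_iff cross7_derivation_diff skew_symmetric_diff)

lemma k_alg_diff: "A \<in> k_alg i \<Longrightarrow> B \<in> k_alg i \<Longrightarrow> A - B \<in> k_alg i"
  by (simp add: k_alg_iff g2_diff matrix_vector_mult_diff_rdistrib)

lemma matrix_mult_add_rdistrib: "(A + B) ** C = A ** C + B ** (C::'a::semiring_1^'n^'m)"
  by (simp add: matrix_matrix_mult_def vec_eq_iff sum.distrib algebra_simps)

lemma matrix_mult_diff_rdistrib: "(A - B) ** C = A ** C - B ** (C::'a::ring_1^'n^'m)"
  by (simp add: matrix_matrix_mult_def vec_eq_iff sum_subtractf algebra_simps)

lemma trace_scaleR: "trace (c *\<^sub>R A) = c * trace (A::real^'n^'n)"
  by (simp add: trace_def sum_distrib_left)

lemma form0_diff_left: "form0 (A - B) C = form0 A C - form0 B (C::real^'n^'n)"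
  unfolding form0_def by (simp add: matrix_mult_diff_rdistrib trace_sub)

lemma p_space_diff: "A \<in> p_space i \<Longrightarrow> B \<in> p_space i \<Longrightarrow> A - B \<in> p_space i"
  by (simp add: p_space_def g2_diff form0_diff_left)

lemma trace_outer_mult: "trace (outer a b ** Z) = b \<bullet> (Z *v a)"
proof -
  have "trace (outer a b ** Z) = (\<Sum>r\<in>UNIV. \<Sum>s\<in>UNIV. b$s * (Z$s$r * a$r))"
    unfolding trace_def outer_def matrix_matrix_mult_def by (intro sum.cong refl) (simp add: mult_ac)
  also have "\<dots> = (\<Sum>s\<in>UNIV. \<Sum>r\<in>UNIV. b$s * (Z$s$r * a$r))"
    by (rule sum.swap)
  finally show ?thesis
    by (simp add: inner_vec_def matrix_vector_mult_def sum_distrib_left)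
qed

lemma form0_p_matrix_k_alg:
  assumes "Z \<in> k_alg i"
  shows "form0 (p_matrix i u) Z = 0"
proof -
  have der: "cross7_derivation Z" and skew: "skew_symmetric Z" and Zi: "Z *v i = 0"
    using assms by (auto simp: k_alg_iff g2_iff)
  have "i \<bullet> (Z *v u) = - ((Z *v i) \<bullet> u)"
    using skew unfolding skew_symmetric_def by (metis inner_commute)
  then have rank_two: "trace ((outer u i - outer i u) ** Z) = 0"
    using Zi by (simp add: matrix_mult_diff_rdistrib trace_sub trace_outer_mult)
  have "cross7_matrix i ** Z = Z ** cross7_matrix i"
    using der Zi unfolding matrix_eq cross7_derivation_def
    by (simp add: matrix_vector_mul_assoc[symmetric] cross7_matrix_mult_vec)
  then have "trace (cross7_matrix u ** cross7_matrix i ** Z) = trace (cross7_matrix u ** Z ** cross7_matrix i)"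
    by (simp add: matrix_mul_assoc[symmetric])
  also have "\<dots> = trace (cross7_matrix i ** cross7_matrix u ** Z)"
    by (metis matrix_mul_assoc trace_mul_sym)
  finally have commutator:
    "trace ((cross7_matrix i ** cross7_matrix u - cross7_matrix u ** cross7_matrix i) ** Z) = 0"
    by (simp add: matrix_mult_diff_rdistrib trace_sub)
  show ?thesis
    unfolding form0_def p_matrix_def
    by (simp add: matrix_mult_add_rdistrib scalar_matrix_assoc[symmetric] trace_add trace_scaleR
        rank_two commutator)
qed

lemma p_matrix_in_p_space: "p_matrix i u \<in> p_space i"
  by (simp add: p_space_def p_matrix_in_g2 form0_p_matrix_k_alg)

lemma skew_symmetric_form0_self_eq_0:
  assumes "skew_symmetric D" and "form0 D D = 0"
  shows "D = 0"
proof -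
  have "D $ b $ a = - D $ a $ b" for a b
  proof -
    have "(D *v axis a 1) \<bullet> axis b 1 = - (axis a 1 \<bullet> (D *v axis b 1))"
      using assms(1) unfolding skew_symmetric_def by blast
    then show ?thesis
      by (simp add: inner_axis inner_axis' matrix_vector_mult_basis column_def)
  qed
  then have entry_product: "D $ a $ b * D $ b $ a = - (D $ a $ b)\<^sup>2" for a b
    by (metis mult_minus_right power2_eq_square)
  have "form0 D D = - (\<Sum>a\<in>UNIV. \<Sum>b\<in>UNIV. D $ a $ b * D $ b $ a)"
    by (simp add: form0_def trace_def matrix_matrix_mult_def)
  also have "\<dots> = (\<Sum>a\<in>UNIV. \<Sum>b\<in>UNIV. (D $ a $ b)\<^sup>2)"
    by (simp add: entry_product sum_negf)
  finally have "(\<Sum>a\<in>UNIV. \<Sum>b\<in>UNIV. (D $ a $ b)\<^sup>2) = 0"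
    using assms(2) by simp
  then have "\<forall>a\<in>UNIV. \<forall>b\<in>UNIV. (D $ a $ b)\<^sup>2 = 0"
    by (simp add: sum_nonneg_eq_0_iff sum_nonneg)
  then show ?thesis
    by (simp add: vec_eq_iff)
qed

lemma k_alg_inter_p_space: "Z \<in> k_alg i \<Longrightarrow> Z \<in> p_space i \<Longrightarrow> Z = 0"
  by (rule skew_symmetric_form0_self_eq_0) (auto simp: k_alg_iff g2_iff p_space_def)

lemma p_space_eq_p_matrix:
  assumes "i \<bullet> i = 1" and "X \<in> p_space i"
  shows "X = p_matrix i (X *v i)"
proof -
  have "X \<in> g2"
    using assms(2) by (simp add: p_space_def)
  then have "i \<bullet> (X *v i) = 0"
    by (simp add: g2_iff skew_symmetric_inner_self)
  then have "X - p_matrix i (X *v i) \<in> k_alg i"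
    using \<open>X \<in> g2\<close> assms(1)
    by (simp add: k_alg_iff g2_diff p_matrix_in_g2 matrix_vector_mult_diff_rdistrib p_matrix_mult_vec_self)
  moreover have "X - p_matrix i (X *v i) \<in> p_space i"
    by (simp add: assms(2) p_space_diff p_matrix_in_p_space)
  ultimately have "X - p_matrix i (X *v i) = 0"
    by (rule k_alg_inter_p_space)
  then show ?thesis
    by simp
qed

lemma k_part_eq:
  assumes "i \<bullet> i = 1" and "W \<in> g2"
  shows "k_part i W = W - p_matrix i (W *v i)"
  unfolding k_part_def
proof (rule the_equality)
  have "i \<bullet> (W *v i) = 0"
    using assms(2) by (simp add: g2_iff skew_symmetric_inner_self)
  then show "W - p_matrix i (W *v i) \<in> k_alg i \<and> W - (W - p_matrix i (W *v i)) \<in> p_space i"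
    using assms
    by (simp add: k_alg_iff g2_diff p_matrix_in_g2 matrix_vector_mult_diff_rdistrib
        p_matrix_mult_vec_self p_matrix_in_p_space)
next
  fix Z
  assume Z: "Z \<in> k_alg i \<and> W - Z \<in> p_space i"
  have "i \<bullet> (W *v i) = 0"
    using assms(2) by (simp add: g2_iff skew_symmetric_inner_self)
  then have "Z - (W - p_matrix i (W *v i)) \<in> k_alg i"
    using Z assms
    by (simp add: k_alg_diff k_alg_iff g2_diff p_matrix_in_g2 matrix_vector_mult_diff_rdistrib
        p_matrix_mult_vec_self)
  moreover have "Z - (W - p_matrix i (W *v i)) \<in> p_space i"
    using p_space_diff[where A = "p_matrix i (W *v i)" and B = "W - Z"] p_matrix_in_p_space Z
    by (simp add: algebra_simps)
  ultimately have "Z - (W - p_matrix i (W *v i)) = 0"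
    by (rule k_alg_inter_p_space)
  then show "Z = W - p_matrix i (W *v i)"
    by simp
qed

lemma k_part_eq_0_iff:
  assumes "i \<bullet> i = 1" and "W \<in> g2"
  shows "k_part i W = 0 \<longleftrightarrow> W \<in> p_space i"
proof
  assume "k_part i W = 0"
  then have "W = p_matrix i (W *v i)"
    using k_part_eq[OF assms] by simp
  then show "W \<in> p_space i"
    by (metis p_matrix_in_p_space)
next
  assume "W \<in> p_space i"
  then have "W = p_matrix i (W *v i)"
    by (rule p_space_eq_p_matrix[OF assms(1)])
  then show "k_part i W = 0"
    using k_part_eq[OF assms] by (metis diff_self)
qed

section \<open>Brackets of elements of \<open>\<pp>\<close>\<close>

lemma lie_bracket_mult_vec: "lie_bracket A B *v x = A *v (B *v x) - B *v (A *v x)"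
  by (simp add: lie_bracket_def matrix_vector_mult_diff_rdistrib matrix_vector_mul_assoc)

lemma lie_bracket_scaleR_right_self: "lie_bracket A (c *\<^sub>R A) = 0"
  by (simp add: lie_bracket_def matrix_scalar_ac scalar_matrix_assoc[symmetric])

lemma lie_bracket_in_g2:
  assumes "A \<in> g2" and "B \<in> g2"
  shows "lie_bracket A B \<in> g2"
proof -
  have der: "A *v cross7 u v = cross7 (A *v u) v + cross7 u (A *v v)"
      "B *v cross7 u v = cross7 (B *v u) v + cross7 u (B *v v)"
    and skew: "(A *v u) \<bullet> v = - (u \<bullet> (A *v v))" "(B *v u) \<bullet> v = - (u \<bullet> (B *v v))" for u v
    using assms by (auto simp: g2_iff cross7_derivation_def skew_symmetric_def)
  show ?thesis
    unfolding g2_iff cross7_derivation_def skew_symmetric_def lie_bracket_mult_vec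
    by (simp add: der skew matrix_vector_right_distrib cross7_left_diff_distrib
        cross7_right_diff_distrib inner_diff_left inner_diff_right algebra_simps)
qed

lemma p_matrix_mult_vec_orthogonal:
  "i \<bullet> w = 0 \<Longrightarrow> i \<bullet> x = 0 \<Longrightarrow> p_matrix i w *v x = (1/2) *\<^sub>R cross7 i (cross7 w x) - (w \<bullet> x) *\<^sub>R i"
  by (simp add: p_matrix_mult_vec_expand)

lemma lie_bracket_p_matrix_mult_vec_self:
  assumes "i \<bullet> i = 1" "i \<bullet> u = 0" "i \<bullet> v = 0"
  shows "lie_bracket (p_matrix i u) (p_matrix i v) *v i = cross7 i (cross7 u v)"
  using assms
  by (simp add: lie_bracket_mult_vec p_matrix_mult_vec_self p_matrix_mult_vec_orthogonal
      inner_commute[of u v] cross7_skew[of v u] cross7_minus_right)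

lemma inner_lie_bracket_p_matrix:
  assumes "i \<bullet> i = 1" "i \<bullet> u = 0" "i \<bullet> v = 0" and n: "n = cross7 i (cross7 u v)"
  shows "(lie_bracket (p_matrix i u) (p_matrix i v) *v u) \<bullet> v = (u \<bullet> u) * (v \<bullet> v) - (u \<bullet> v)\<^sup>2 + (n \<bullet> n) / 4"
proof -
  have skew: "(p_matrix i w *v x) \<bullet> y = - (x \<bullet> (p_matrix i w *v y))" for w x y
    using p_matrix_in_g2 by (simp add: g2_iff skew_symmetric_def)
  have "i \<bullet> n = 0"
    using n dot_cross7_self by simp
  have images: "p_matrix i u *v u = - (u \<bullet> u) *\<^sub>R i" "p_matrix i v *v v = - (v \<bullet> v) *\<^sub>R i"
    "p_matrix i u *v v = (1/2) *\<^sub>R n - (u \<bullet> v) *\<^sub>R i" "p_matrix i v *v u = - (1/2) *\<^sub>R n - (u \<bullet> v) *\<^sub>R i"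
    using assms(2,3) by (simp_all add: n p_matrix_mult_vec_orthogonal inner_commute[of v u]
        cross7_skew[of v u] cross7_minus_right)
  have "(lie_bracket (p_matrix i u) (p_matrix i v) *v u) \<bullet> v
      = (p_matrix i u *v u) \<bullet> (p_matrix i v *v v) - (p_matrix i v *v u) \<bullet> (p_matrix i u *v v)"
    by (simp add: lie_bracket_mult_vec inner_diff_left skew)
  also have "\<dots> = ((u \<bullet> u) *\<^sub>R i) \<bullet> ((v \<bullet> v) *\<^sub>R i)
      + ((1/2) *\<^sub>R n + (u \<bullet> v) *\<^sub>R i) \<bullet> ((1/2) *\<^sub>R n - (u \<bullet> v) *\<^sub>R i)"
    unfolding images by (simp add: inner_diff_left inner_diff_right inner_add_left algebra_simps)
  also have "\<dots> = (u \<bullet> u) * (v \<bullet> v) - (u \<bullet> v)\<^sup>2 + (n \<bullet> n) / 4"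
    using assms(1) \<open>i \<bullet> n = 0\<close>
    by (simp add: inner_diff_right inner_add_left inner_commute[of n i] power2_eq_square algebra_simps)
  finally show ?thesis .
qed

lemma inner_p_matrix_cross7_cross7:
  assumes "i \<bullet> i = 1" "i \<bullet> u = 0" "i \<bullet> v = 0" and n: "n = cross7 i (cross7 u v)"
  shows "(p_matrix i n *v u) \<bullet> v = (n \<bullet> n) / 2"
proof -
  have "i \<bullet> n = 0"
    using n dot_cross7_self by simp
  then have "(p_matrix i n *v u) \<bullet> v = (1/2) * (cross7 i (cross7 n u) \<bullet> v)"
    using assms(2,3) by (simp add: p_matrix_mult_vec_orthogonal inner_diff_left)
  also have "\<dots> = - (1/2) * (n \<bullet> cross7 u (cross7 i v))"
    by (simp add: dot_cross7_cross7)
  also have "cross7 u (cross7 i v) = (u \<bullet> v) *\<^sub>R i - n"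
    using cross7_cross7_polar[of u i v] assms by (simp add: inner_commute algebra_simps)
  finally show ?thesis
    using \<open>i \<bullet> n = 0\<close> by (simp add: inner_diff_right inner_commute[of n i])
qed

text \<open>Comparing \<open>\<langle>[X, Y] u, v\<rangle>\<close> computed from the bracket and from \<open>p_matrix i n\<close> gives
  \<open>3 (|u|\<^sup>2|v|\<^sup>2 - (u\<bullet>v)\<^sup>2) + (i \<bullet> u \<times> v)\<^sup>2 = 0\<close>.\<close>
lemma cauchy_schwarz_eq_of_lie_bracket_p_matrix:
  assumes "i \<bullet> i = 1" "i \<bullet> u = 0" "i \<bullet> v = 0"
    and "lie_bracket (p_matrix i u) (p_matrix i v) = p_matrix i (cross7 i (cross7 u v))"
  shows "(u \<bullet> u) * (v \<bullet> v) = (u \<bullet> v)\<^sup>2"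
proof -
  define n where "n = cross7 i (cross7 u v)"
  have "(u \<bullet> u) * (v \<bullet> v) - (u \<bullet> v)\<^sup>2 + (n \<bullet> n) / 4 = (n \<bullet> n) / 2"
    using inner_lie_bracket_p_matrix[OF assms(1-3) n_def] inner_p_matrix_cross7_cross7[OF assms(1-3) n_def]
      assms(4) by (simp add: n_def)
  moreover have "n \<bullet> n = (u \<bullet> u) * (v \<bullet> v) - (u \<bullet> v)\<^sup>2 - (i \<bullet> cross7 u v)\<^sup>2"
    using assms(1) by (simp add: n_def norm_cross7)
  moreover have "0 \<le> (u \<bullet> u) * (v \<bullet> v) - (u \<bullet> v)\<^sup>2"
    using norm_cross7[of u v] inner_ge_zero[of "cross7 u v"] by simp
  ultimately show ?thesis
    using zero_le_power2[of "i \<bullet> cross7 u v"] by linarith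
qed

lemma scaleR_eq_of_cauchy_schwarz_eq:
  fixes u v :: "'a::real_inner"
  assumes "(u \<bullet> u) * (v \<bullet> v) = (u \<bullet> v)\<^sup>2" and "u \<noteq> 0"
  shows "v = ((u \<bullet> v) / (u \<bullet> u)) *\<^sub>R u"
proof -
  define l where "l = (u \<bullet> v) / (u \<bullet> u)"
  have "0 < u \<bullet> u"
    using assms(2) by simp
  have "(v - l *\<^sub>R u) \<bullet> (v - l *\<^sub>R u) = v \<bullet> v - 2 * l * (u \<bullet> v) + l\<^sup>2 * (u \<bullet> u)"
    by (simp add: inner_diff_left inner_diff_right inner_commute power2_eq_square algebra_simps)
  also have "\<dots> = ((u \<bullet> u) * (v \<bullet> v) - (u \<bullet> v)\<^sup>2) / (u \<bullet> u)"
    using \<open>0 < u \<bullet> u\<close> by (simp add: l_def field_simps power2_eq_square)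
  finally have "v - l *\<^sub>R u = 0"
    using assms(1) by simp
  then show ?thesis
    by (simp add: l_def)
qed

lemma lie_bracket_eq_0_of_in_p_space:
  assumes "i \<bullet> i = 1" and "X \<in> p_space i" "Y \<in> p_space i" and "lie_bracket X Y \<in> p_space i"
  shows "lie_bracket X Y = 0"
proof -
  define u v where "u = X *v i" and "v = Y *v i"
  have X: "X = p_matrix i u" and Y: "Y = p_matrix i v"
    unfolding u_def v_def using p_space_eq_p_matrix assms(1-3) by blast+
  have "i \<bullet> u = 0" "i \<bullet> v = 0"
    using assms(2,3) by (simp_all add: u_def v_def p_space_def g2_iff skew_symmetric_inner_self)
  moreover have "lie_bracket X Y = p_matrix i (cross7 i (cross7 u v))"
    using p_space_eq_p_matrix[OF assms(1,4)]
      lie_bracket_p_matrix_mult_vec_self[OF assms(1) \<open>i \<bullet> u = 0\<close> \<open>i \<bullet> v = 0\<close>]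
    by (simp add: X Y)
  ultimately have cs: "(u \<bullet> u) * (v \<bullet> v) = (u \<bullet> v)\<^sup>2"
    using cauchy_schwarz_eq_of_lie_bracket_p_matrix assms(1) X Y by blast
  show ?thesis
  proof (cases "u = 0")
    case True
    then show ?thesis
      by (simp add: X lie_bracket_def)
  next
    case False
    then have "Y = ((u \<bullet> v) / (u \<bullet> u)) *\<^sub>R X"
      using scaleR_eq_of_cauchy_schwarz_eq[OF cs] by (metis X Y p_matrix_scaleR)
    then show ?thesis
      by (simp add: lie_bracket_scaleR_right_self)
  qed
qed

theorem mainTheorem7:
  fixes i :: "real^7" and X Y :: "real^7^7"
  assumes "norm i = 1"
    and "X \<in> p_space i" and "Y \<in> p_space i"
  shows "lie_bracket X Y = 0 \<longleftrightarrow> k_part i (lie_bracket X Y) = 0"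
proof -
  have unit: "i \<bullet> i = 1"
    using assms(1) by (simp add: norm_eq_1)
  have "lie_bracket X Y \<in> g2"
    using assms(2,3) by (simp add: p_space_def lie_bracket_in_g2)
  then have "k_part i (lie_bracket X Y) = 0 \<longleftrightarrow> lie_bracket X Y \<in> p_space i"
    by (rule k_part_eq_0_iff[OF unit])
  moreover have "(0::real^7^7) \<in> p_space i"
    using p_matrix_in_p_space[of i 0] by simp
  ultimately show ?thesis
    using lie_bracket_eq_0_of_in_p_space[OF unit assms(2,3)] by auto
qed

end
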